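(* Let $Q$ be the rate matrix of an irreducible BD process on $\mathcal{M}=\{0,1\}^k$ that is reversible with respect to its limiting distribution $\pi$, with $\pi(m)>0$ for all $m$. Let $(\varepsilon_s)_{s\ge1}$ be a sequence with $\varepsilon_s>0$ and $\varepsilon_s q_i(m)\le 1$ for all $s,i,m$, satisfying $$\lim_{s\to\infty}\varepsilon_s=0\quad\text{and}\quad\sum_{s=1}^\infty\varepsilon_s=\infty.$$ Consider the time-inhomogeneous Markov chain on $\mathcal{M}$ whose transition matrix at iteration $s$ is $P_{\varepsilon_s}$ (defined below), with arbitrary initial distribution $\mu_0$, and let $\mu_s=\mu_0P_{\varepsilon_1}P_{\varepsilon_2}\cdots P_{\varepsilon_s}$ be its distribution after $s$ iterations. Then for every vector norm $\|\cdot\|$ on $\mathbb{R}^l$, $$\lim_{s\to\infty}\|\mu_s-\pi\|=0.$$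
   Context: $\mathcal{M}=\{0,1\}^k$, $l=2^k$; for $m\in\mathcal{M}$, $m^i$ is $m$ with coordinate $i$ flipped. The BD process is the continuous-time Markov chain with rate matrix $Q(m,m^i)=q_i(m)\ge0$, $Q(m,m)=-\sum_{i=1}^k q_i(m)$, $Q(m,m')=0$ otherwise. Reversibility: $\pi(m)Q(m,m')=\pi(m')Q(m',m)$ for all $m,m'$. For models $m,m'$, $H_{m,m'}$ is the set of coordinates where they differ, and for $\varepsilon>0$ $$P_\varepsilon(m,m')=\prod_{i\in H_{m,m'}} \varepsilon\, q_i(m)\prod_{i\notin H_{m,m'}}\bigl(1-\varepsilon\, q_i(m)\bigr),$$ i.e. from state $m$ each coordinate $i$ is flipped independently with probability $\varepsilon q_i(m)$. Distributions are row vectors in $\mathbb{R}^l$. *)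

theory Defs
  imports "HOL-Analysis.Analysis"
begin

text \<open>Models: {0,1}^k is represented as the subsets of {..<k}
  (m corresponds to its set of coordinates equal to 1).\<close>

definition models :: "nat \<Rightarrow> nat set set" where
  "models k = Pow {..<k}"

definition flip :: "nat set \<Rightarrow> nat \<Rightarrow> nat set" where
  "flip m i = m - {i} \<union> ({i} - m)"

definition Hdiff :: "nat set \<Rightarrow> nat set \<Rightarrow> nat set" where
  "Hdiff m m' = (m - m') \<union> (m' - m)"

definition Qrate :: "nat \<Rightarrow> (nat \<Rightarrow> nat set \<Rightarrow> real) \<Rightarrow> nat set \<Rightarrow> nat set \<Rightarrow> real" where
  "Qrate k q m m' =
     (if m = m' then - (\<Sum>i<k. q i m)
      else if (\<exists>i<k. m' = flip m i) then q (THE i. i < k \<and> m' = flip m i) m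
      else 0)"

definition irreducible_Q :: "nat \<Rightarrow> (nat set \<Rightarrow> nat set \<Rightarrow> real) \<Rightarrow> bool" where
  "irreducible_Q k Q \<longleftrightarrow>
     (\<forall>m\<in>models k. \<forall>m'\<in>models k.
        (m, m') \<in> {(a, b). a \<in> models k \<and> b \<in> models k \<and> a \<noteq> b \<and> Q a b > 0}\<^sup>*)"

definition is_distribution :: "nat \<Rightarrow> (nat set \<Rightarrow> real) \<Rightarrow> bool" where
  "is_distribution k p \<longleftrightarrow> (\<forall>m\<in>models k. p m \<ge> 0) \<and> (\<Sum>m\<in>models k. p m) = 1"

text \<open>Stationarity pi Q = 0 (for an irreducible finite CTMC this characterises
  the limiting distribution).\<close>
definition stationary_Q :: "nat \<Rightarrow> (nat set \<Rightarrow> nat set \<Rightarrow> real) \<Rightarrow> (nat set \<Rightarrow> real) \<Rightarrow> bool" where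
  "stationary_Q k Q p \<longleftrightarrow> (\<forall>m'\<in>models k. (\<Sum>m\<in>models k. p m * Q m m') = 0)"

definition reversible_Q :: "nat \<Rightarrow> (nat set \<Rightarrow> nat set \<Rightarrow> real) \<Rightarrow> (nat set \<Rightarrow> real) \<Rightarrow> bool" where
  "reversible_Q k Q p \<longleftrightarrow> (\<forall>m\<in>models k. \<forall>m'\<in>models k. p m * Q m m' = p m' * Q m' m)"

definition Peps :: "nat \<Rightarrow> (nat \<Rightarrow> nat set \<Rightarrow> real) \<Rightarrow> real \<Rightarrow> nat set \<Rightarrow> nat set \<Rightarrow> real" where
  "Peps k q e m m' =
     (\<Prod>i\<in>Hdiff m m'. e * q i m) * (\<Prod>i\<in>{..<k} - Hdiff m m'. 1 - e * q i m)"

fun mu_seq :: "nat \<Rightarrow> (nat \<Rightarrow> nat set \<Rightarrow> real) \<Rightarrow> (nat \<Rightarrow> real) \<Rightarrow> (nat set \<Rightarrow> real)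
                 \<Rightarrow> nat \<Rightarrow> nat set \<Rightarrow> real" where
  "mu_seq k q eps mu0 0 = mu0"
| "mu_seq k q eps mu0 (Suc s) =
     (\<lambda>m'. \<Sum>m\<in>models k. mu_seq k q eps mu0 s m * Peps k q (eps (Suc s)) m m')"

text \<open>A norm on R^l, l = 2^k, where vectors are functions on models k
  (entries outside models k are required to be 0).\<close>
definition vecs :: "nat \<Rightarrow> (nat set \<Rightarrow> real) set" where
  "vecs k = {v. \<forall>m. m \<notin> models k \<longrightarrow> v m = 0}"

definition is_norm_on :: "nat \<Rightarrow> ((nat set \<Rightarrow> real) \<Rightarrow> real) \<Rightarrow> bool" where
  "is_norm_on k N \<longleftrightarrow>
     (\<forall>v\<in>vecs k. N v \<ge> 0 \<and> (N v = 0 \<longleftrightarrow> v = (\<lambda>_. 0))) \<and>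
     (\<forall>v\<in>vecs k. \<forall>c. N (\<lambda>m. c * v m) = \<bar>c\<bar> * N v) \<and>
     (\<forall>v\<in>vecs k. \<forall>w\<in>vecs k. N (\<lambda>m. v m + w m) \<le> N v + N w)"

end

theory Submission
  imports Defs
begin

(* Write v_s = mu_s - pi and measure it in the norm of L^2(1/pi), whose square
   is the chi^2-distance sum_m v_s(m)^2 / pi(m). Expanding the product of independent flips,
   P_eps = I + eps Q + O(eps^2) entrywise. Reversibility turns the first-order drift
   <v, v Q> into minus half the Dirichlet form of v/pi, and irreducibility gives a Poincare
   inequality bounding the chi^2-distance by that Dirichlet form. Hence one step contracts the
   distance by a factor 1 - gamma eps_s + O(eps_s^2) up to an additive O(eps_s^2). Since
   eps_s -> 0 with divergent sum, this recursion drives the distance to 0, and on the finite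
   state space every norm is dominated by the coordinates. *)

section \<open>Transition probabilities of the flip chain\<close>

lemma Hdiff_Hdiff: "Hdiff m (Hdiff m X) = X"
  by (auto simp: Hdiff_def)

lemma Hdiff_refl: "Hdiff m m = {}"
  by (auto simp: Hdiff_def)

lemma Hdiff_flip: "Hdiff m (flip m i) = {i}"
  by (auto simp: Hdiff_def flip_def)

lemma Hdiff_subset_models:
  "m \<in> models k \<Longrightarrow> m' \<in> models k \<Longrightarrow> Hdiff m m' \<subseteq> {..<k}"
  by (auto simp: Hdiff_def models_def)

lemma flip_inject: "flip m i = flip m j \<Longrightarrow> i = j"
  by (auto simp: flip_def)

lemma flip_neq: "flip m i \<noteq> m"
  by (auto simp: flip_def)

lemma Qrate_diag: "Qrate k q m m = - (\<Sum>i<k. q i m)"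
  by (simp add: Qrate_def)

lemma Qrate_flip:
  assumes "i < k"
  shows "Qrate k q m (flip m i) = q i m"
proof -
  have "(THE j. j < k \<and> flip m i = flip m j) = i"
    using assms by (auto dest: flip_inject)
  then show ?thesis
    using assms flip_neq[of m i] unfolding Qrate_def by auto
qed

lemma Qrate_eq_0:
  assumes "m' \<noteq> m" and "\<not> (\<exists>i<k. m' = flip m i)"
  shows "Qrate k q m m' = 0"
  using assms unfolding Qrate_def by auto

lemma Qrate_off_diag_nonneg:
  assumes "\<forall>i<k. 0 \<le> q i m" and "m' \<noteq> m"
  shows "0 \<le> Qrate k q m m'"
  using assms by (cases "\<exists>i<k. m' = flip m i") (auto simp: Qrate_flip Qrate_eq_0)

lemma prod_one_minus_le:
  fixes f :: "'a \<Rightarrow> real"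
  assumes "\<And>x. x \<in> A \<Longrightarrow> f x \<in> {0..1}"
  shows "(\<Prod>x\<in>A. 1 - f x) \<le> 1 - sum f A + (sum f A)\<^sup>2"
  using assms
proof (induction A rule: infinite_finite_induct)
  case (insert x A)
  let ?P = "\<Prod>x\<in>A. 1 - f x" and ?S = "sum f A"
  have fx: "0 \<le> f x" using insert.prems by auto
  have S: "0 \<le> ?S" using insert.prems by (intro sum_nonneg) auto
  have "1 - ?S \<le> ?P"
    by (rule Weierstrass_prod_ineq) (use insert.prems in auto)
  then have "f x * (1 - ?S) \<le> f x * ?P"
    using fx by (rule mult_left_mono)
  then have "(1 - f x) * ?P \<le> ?P - f x * (1 - ?S)"
    by (simp add: algebra_simps)
  also have "\<dots> \<le> 1 - ?S + ?S\<^sup>2 - f x * (1 - ?S)"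
    using insert by auto
  also have "\<dots> \<le> 1 - (f x + ?S) + (f x + ?S)\<^sup>2"
    using mult_nonneg_nonneg[OF fx S] mult_nonneg_nonneg[OF fx fx]
    by (simp add: algebra_simps power2_eq_square)
  finally show ?case
    using insert.hyps by simp
qed simp_all

lemma Peps_nonneg:
  assumes "m \<in> models k" "m' \<in> models k" and "\<forall>i<k. 0 \<le> e * q i m \<and> e * q i m \<le> 1"
  shows "0 \<le> Peps k q e m m'"
  unfolding Peps_def
  by (rule mult_nonneg_nonneg; rule prod_nonneg)
     (use Hdiff_subset_models[OF assms(1,2)] assms(3) in auto)

lemma Peps_row_sum:
  assumes "m \<in> models k"
  shows "(\<Sum>m'\<in>models k. Peps k q e m m') = 1"
proof -
  let ?K = "{..<k}"
  have "(\<Sum>m'\<in>models k. Peps k q e m m')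
      = (\<Sum>H\<in>Pow ?K. (\<Prod>i\<in>H. e * q i m) * (\<Prod>i\<in>?K - H. 1 - e * q i m))"
    unfolding Peps_def
    by (rule sum.reindex_bij_witness[where i="Hdiff m" and j="Hdiff m"])
       (use assms in \<open>auto simp: Hdiff_Hdiff models_def Hdiff_def\<close>)
  also have "\<dots> = (\<Prod>i\<in>?K. e * q i m + (1 - e * q i m))"
    by (rule prod_add[symmetric]) simp
  finally show ?thesis by simp
qed

lemma Peps_diag_approx:
  assumes "\<forall>i<k. 0 \<le> e * q i m \<and> e * q i m \<le> 1"
  shows "\<bar>Peps k q e m m - 1 - e * Qrate k q m m\<bar> \<le> (e * (\<Sum>i<k. q i m))\<^sup>2"
proof -
  let ?T = "\<Sum>i<k. e * q i m"
  have "1 - ?T \<le> (\<Prod>i<k. 1 - e * q i m)"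
    by (rule Weierstrass_prod_ineq) (use assms in auto)
  moreover have "(\<Prod>i<k. 1 - e * q i m) \<le> 1 - ?T + ?T\<^sup>2"
    by (rule prod_one_minus_le) (use assms in auto)
  ultimately show ?thesis
    by (simp add: Peps_def Hdiff_refl Qrate_diag sum_distrib_left abs_le_iff)
qed

lemma Peps_flip_approx:
  assumes "i < k" and "\<forall>j<k. 0 \<le> e * q j m \<and> e * q j m \<le> 1"
  shows "\<bar>Peps k q e m (flip m i) - e * Qrate k q m (flip m i)\<bar> \<le> (e * (\<Sum>j<k. q j m))\<^sup>2"
proof -
  let ?a = "\<lambda>j. e * q j m" and ?R = "{..<k} - {i}"
  have "1 - sum ?a ?R \<le> (\<Prod>j\<in>?R. 1 - ?a j)"
    by (rule Weierstrass_prod_ineq) (use assms(2) in auto)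
  moreover have "(\<Prod>j\<in>?R. 1 - ?a j) \<le> 1"
    by (rule prod_le_1) (use assms(2) in auto)
  moreover have "sum ?a ?R \<le> sum ?a {..<k}" and "?a i \<le> sum ?a {..<k}"
    using assms by (auto intro!: sum_mono2 member_le_sum)
  ultimately have "?a i * (1 - (\<Prod>j\<in>?R. 1 - ?a j)) \<le> sum ?a {..<k} * sum ?a {..<k}"
    using assms by (intro mult_mono) auto
  moreover have "Peps k q e m (flip m i) - e * Qrate k q m (flip m i)
      = - (?a i * (1 - (\<Prod>j\<in>?R. 1 - ?a j)))"
    using assms by (simp add: Peps_def Hdiff_flip Qrate_flip algebra_simps)
  moreover have "0 \<le> ?a i * (1 - (\<Prod>j\<in>?R. 1 - ?a j))"
    using assms \<open>(\<Prod>j\<in>?R. 1 - ?a j) \<le> 1\<close> by simp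
  ultimately show ?thesis
    by (simp add: sum_distrib_left power2_eq_square)
qed

lemma Peps_far_le:
  assumes "m \<in> models k" "m' \<in> models k" "m' \<noteq> m" "\<not> (\<exists>i<k. m' = flip m i)"
    and "\<forall>i<k. 0 \<le> e * q i m \<and> e * q i m \<le> 1"
  shows "Peps k q e m m' \<le> (e * (\<Sum>i<k. q i m))\<^sup>2"
proof -
  let ?a = "\<lambda>j. e * q j m" and ?H = "Hdiff m m'"
  have H: "?H \<subseteq> {..<k}" using Hdiff_subset_models[OF assms(1,2)] .
  obtain i j where ij: "i \<in> ?H" "j \<in> ?H" "i \<noteq> j"
  proof -
    have "?H \<noteq> {}" using assms(3) by (auto simp: Hdiff_def)
    then obtain i where i: "i \<in> ?H" by blast
    have "?H \<noteq> {i}"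
    proof
      assume "?H = {i}"
      then have "m' = flip m i" unfolding Hdiff_def flip_def by blast
      with assms(4) i H show False by blast
    qed
    with i that show thesis by blast
  qed
  have a_unit: "0 \<le> ?a l" "?a l \<le> 1" if "l \<in> {..<k}" for l
    using that assms(5) by simp_all
  have a_nonneg: "0 \<le> ?a l" if "l \<in> ?H" for l
    using that H a_unit by blast
  have "Peps k q e m m' \<le> (\<Prod>l\<in>?H. ?a l)"
    unfolding Peps_def
  proof (rule mult_right_le_one_le)
    show "0 \<le> (\<Prod>l\<in>?H. ?a l)" using a_nonneg by (rule prod_nonneg)
    show "0 \<le> (\<Prod>l\<in>{..<k} - ?H. 1 - ?a l)" using a_unit by (intro prod_nonneg) simp
    show "(\<Prod>l\<in>{..<k} - ?H. 1 - ?a l) \<le> 1" using a_unit by (intro prod_le_1) simp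
  qed
  also have "\<dots> = (\<Prod>l\<in>?H - {i, j}. ?a l) * (?a i * ?a j)"
    using ij finite_subset[OF H] by (subst prod.subset_diff[of "{i, j}"]) auto
  also have "\<dots> \<le> ?a i * ?a j"
  proof (rule mult_left_le_one_le)
    show "0 \<le> (\<Prod>l\<in>?H - {i, j}. ?a l)" using a_nonneg by (intro prod_nonneg) simp
    show "(\<Prod>l\<in>?H - {i, j}. ?a l) \<le> 1" using a_unit H by (intro prod_le_1) auto
    show "0 \<le> ?a i * ?a j" using a_nonneg ij by simp
  qed
  also have "\<dots> \<le> (\<Sum>l<k. ?a l) * (\<Sum>l<k. ?a l)"
    using a_unit a_nonneg ij H by (intro mult_mono member_le_sum sum_nonneg) auto
  finally show ?thesis by (simp add: sum_distrib_left power2_eq_square)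
qed

lemma Peps_approx:
  assumes "m \<in> models k" "m' \<in> models k" and "\<forall>i<k. 0 \<le> e * q i m \<and> e * q i m \<le> 1"
  shows "\<bar>Peps k q e m m' - (if m = m' then 1 else 0) - e * Qrate k q m m'\<bar>
           \<le> (e * (\<Sum>i<k. q i m))\<^sup>2"
proof (cases "m' = m")
  case True
  then show ?thesis using Peps_diag_approx[of k e q m] assms(3) by simp
next
  case off_diag: False
  show ?thesis
  proof (cases "\<exists>i<k. m' = flip m i")
    case True
    then obtain i where "i < k" "m' = flip m i" by blast
    then show ?thesis using Peps_flip_approx[of i k e q m] assms(3) flip_neq[of m i] by simp
  next
    case False
    then show ?thesis
      using off_diag Peps_far_le[where e=e and q=q, OF assms(1,2) off_diag False assms(3)]
        Peps_nonneg[where e=e and q=q, OF assms]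
      by (simp add: Qrate_eq_0)
  qed
qed

lemma mu_seq_distribution:
  assumes mu0: "is_distribution k mu0"
    and eps_q: "\<forall>s\<ge>1. \<forall>i<k. \<forall>m\<in>models k. 0 \<le> eps s * q i m \<and> eps s * q i m \<le> 1"
  shows "is_distribution k (mu_seq k q eps mu0 s)"
proof (induction s)
  case 0
  then show ?case using mu0 by simp
next
  case (Suc s)
  let ?mu = "mu_seq k q eps mu0 s" and ?P = "Peps k q (eps (Suc s))"
  have "0 \<le> ?mu m * ?P m m'" if "m \<in> models k" "m' \<in> models k" for m m'
    using Suc that eps_q Peps_nonneg[OF that] unfolding is_distribution_def
    by (simp add: mult_nonneg_nonneg)
  moreover have "(\<Sum>m'\<in>models k. \<Sum>m\<in>models k. ?mu m * ?P m m')
      = (\<Sum>m\<in>models k. ?mu m * (\<Sum>m'\<in>models k. ?P m m'))"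
    by (subst sum.swap) (simp add: sum_distrib_left)
  ultimately show ?case
    using Suc by (simp add: Peps_row_sum is_distribution_def sum_nonneg)
qed

section \<open>Dirichlet form and Poincare inequality\<close>

definition dirichlet_form :: "'a set \<Rightarrow> ('a \<Rightarrow> real) \<Rightarrow> ('a \<Rightarrow> 'a \<Rightarrow> real) \<Rightarrow> ('a \<Rightarrow> real) \<Rightarrow> real"
  where "dirichlet_form M p Q f = (\<Sum>a\<in>M. \<Sum>b\<in>M. p a * Q a b * (f a - f b)\<^sup>2)"

lemma dirichlet_form_summand_nonneg:
  fixes p f :: "'a \<Rightarrow> real" and Q :: "'a \<Rightarrow> 'a \<Rightarrow> real"
  assumes "\<forall>a\<in>M. 0 \<le> p a" and "\<forall>a\<in>M. \<forall>b\<in>M. a \<noteq> b \<longrightarrow> 0 \<le> Q a b"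
    and "a \<in> M" "b \<in> M"
  shows "0 \<le> p a * Q a b * (f a - f b)\<^sup>2"
proof (cases "a = b")
  case False
  then show ?thesis using assms by (intro mult_nonneg_nonneg) auto
qed simp

lemma dirichlet_form_nonneg:
  assumes "\<forall>a\<in>M. 0 \<le> p a" and "\<forall>a\<in>M. \<forall>b\<in>M. a \<noteq> b \<longrightarrow> 0 \<le> Q a b"
  shows "0 \<le> dirichlet_form M p Q f"
  unfolding dirichlet_form_def
  using dirichlet_form_summand_nonneg[OF assms] by (intro sum_nonneg) auto

lemma dirichlet_form_ge_summand:
  assumes "finite M" and "\<forall>a\<in>M. 0 \<le> p a" and "\<forall>a\<in>M. \<forall>b\<in>M. a \<noteq> b \<longrightarrow> 0 \<le> Q a b"
    and "a \<in> M" "b \<in> M"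
  shows "p a * Q a b * (f a - f b)\<^sup>2 \<le> dirichlet_form M p Q f"
proof -
  note nonneg = dirichlet_form_summand_nonneg[OF assms(2,3)]
  have "p a * Q a b * (f a - f b)\<^sup>2 \<le> (\<Sum>b\<in>M. p a * Q a b * (f a - f b)\<^sup>2)"
    using assms nonneg by (intro member_le_sum) auto
  also have "\<dots> \<le> dirichlet_form M p Q f"
    unfolding dirichlet_form_def using assms nonneg by (intro member_le_sum sum_nonneg) auto
  finally show ?thesis .
qed

text \<open>Along a path of positive rates, each edge costs a bounded multiple of the Dirichlet form.\<close>
lemma sq_diff_le_dirichlet_form:
  assumes fin: "finite M" and pos: "\<forall>a\<in>M. 0 < p a"
    and off: "\<forall>a\<in>M. \<forall>b\<in>M. a \<noteq> b \<longrightarrow> 0 \<le> Q a b"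
    and path: "(x, y) \<in> {(a, b). a \<in> M \<and> b \<in> M \<and> a \<noteq> b \<and> 0 < Q a b}\<^sup>*"
  shows "\<exists>C\<ge>0. \<forall>f. (f x - f y)\<^sup>2 \<le> C * dirichlet_form M p Q f"
  using path
proof (induction rule: rtrancl_induct)
  case base
  show ?case by auto
next
  case (step y z)
  then obtain C where C: "C \<ge> 0" "\<forall>f. (f x - f y)\<^sup>2 \<le> C * dirichlet_form M p Q f"
    by blast
  from step.hyps have yz: "y \<in> M" "z \<in> M" and w: "0 < p y * Q y z"
    using pos by auto
  have "(f x - f z)\<^sup>2 \<le> (2 * C + 2 / (p y * Q y z)) * dirichlet_form M p Q f" for f
  proof -
    have edge: "(f y - f z)\<^sup>2 \<le> dirichlet_form M p Q f / (p y * Q y z)"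
      using dirichlet_form_ge_summand[OF fin _ off yz, of p f] pos w
      by (simp add: pos_le_divide_eq mult.commute less_imp_le)
    have "(f x - f z)\<^sup>2 \<le> 2 * (f x - f y)\<^sup>2 + 2 * (f y - f z)\<^sup>2"
      using zero_le_power2[of "f x - 2 * f y + f z"] by (simp add: power2_eq_square algebra_simps)
    also have "\<dots> \<le> (2 * C + 2 / (p y * Q y z)) * dirichlet_form M p Q f"
      using C(2)[rule_format, of f] edge by (simp add: algebra_simps)
    finally show ?thesis .
  qed
  with C(1) w show ?case
    by (intro exI[of _ "2 * C + 2 / (p y * Q y z)"]) auto
qed

lemma finite_uniform_constant:
  fixes g :: "'i \<Rightarrow> 'f \<Rightarrow> real" and h :: "'f \<Rightarrow> real"
  assumes "finite I" and h: "\<And>f. 0 \<le> h f"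
    and "\<And>i. i \<in> I \<Longrightarrow> \<exists>C\<ge>0. \<forall>f. g i f \<le> C * h f"
  shows "\<exists>C\<ge>0. \<forall>i\<in>I. \<forall>f. g i f \<le> C * h f"
  using assms(1,3)
proof (induction I rule: finite_induct)
  case (insert i I)
  then obtain C1 C2 where C: "C1 \<ge> 0" "\<forall>f. g i f \<le> C1 * h f"
    and "C2 \<ge> 0" "\<forall>j\<in>I. \<forall>f. g j f \<le> C2 * h f"
    by (metis insert_iff)
  moreover have "C1 * h f \<le> max C1 C2 * h f" "C2 * h f \<le> max C1 C2 * h f" for f
    using h by (simp_all add: mult_right_mono)
  ultimately have "\<forall>j\<in>insert i I. \<forall>f. g j f \<le> max C1 C2 * h f"
    by (metis insert_iff order_trans)
  then show ?case
    using C(1) by (intro exI[of _ "max C1 C2"]) auto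
qed auto

lemma double_sum_sq_diff:
  fixes p f :: "'a \<Rightarrow> real"
  shows "(\<Sum>x\<in>M. \<Sum>y\<in>M. p x * p y * (f x - f y)\<^sup>2)
     = 2 * (\<Sum>x\<in>M. p x) * (\<Sum>x\<in>M. p x * (f x)\<^sup>2) - 2 * (\<Sum>x\<in>M. p x * f x)\<^sup>2"
proof -
  have "(\<Sum>x\<in>M. \<Sum>y\<in>M. p x * p y * (f x - f y)\<^sup>2)
     = (\<Sum>x\<in>M. \<Sum>y\<in>M. (p x * (f x)\<^sup>2) * p y) + (\<Sum>x\<in>M. \<Sum>y\<in>M. p x * (p y * (f y)\<^sup>2))
       - 2 * (\<Sum>x\<in>M. \<Sum>y\<in>M. (p x * f x) * (p y * f y))"
    by (simp add: power2_diff algebra_simps sum.distrib sum_subtractf sum_distrib_left)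
  also have "\<dots> = (\<Sum>x\<in>M. p x * (f x)\<^sup>2) * (\<Sum>x\<in>M. p x) + (\<Sum>x\<in>M. p x) * (\<Sum>x\<in>M. p x * (f x)\<^sup>2)
       - 2 * ((\<Sum>x\<in>M. p x * f x) * (\<Sum>x\<in>M. p x * f x))"
    by (simp only: sum_product)
  finally show ?thesis by (simp add: power2_eq_square algebra_simps)
qed

lemma poincare_inequality:
  assumes fin: "finite M" and pos: "\<forall>a\<in>M. 0 < p a" and sum_one: "(\<Sum>a\<in>M. p a) = 1"
    and off: "\<forall>a\<in>M. \<forall>b\<in>M. a \<noteq> b \<longrightarrow> 0 \<le> Q a b"
    and irr: "\<forall>x\<in>M. \<forall>y\<in>M. (x, y) \<in> {(a, b). a \<in> M \<and> b \<in> M \<and> a \<noteq> b \<and> 0 < Q a b}\<^sup>*"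
  obtains C where "0 < C"
    and "\<And>f. (\<Sum>a\<in>M. p a * f a) = 0 \<Longrightarrow> (\<Sum>a\<in>M. p a * (f a)\<^sup>2) \<le> C * dirichlet_form M p Q f"
proof -
  have D_nonneg: "0 \<le> dirichlet_form M p Q f" for f
    using pos off by (intro dirichlet_form_nonneg) (auto simp: less_imp_le)
  have "\<exists>C\<ge>0. \<forall>xy\<in>M \<times> M. \<forall>f. (f (fst xy) - f (snd xy))\<^sup>2 \<le> C * dirichlet_form M p Q f"
    using fin D_nonneg sq_diff_le_dirichlet_form[OF fin pos off] irr
    by (intro finite_uniform_constant) auto
  then obtain C where C: "C \<ge> 0"
    and pair: "\<And>x y f. x \<in> M \<Longrightarrow> y \<in> M \<Longrightarrow> (f x - f y)\<^sup>2 \<le> C * dirichlet_form M p Q f"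
    by fastforce
  show thesis
  proof (rule that[of "C / 2 + 1"])
    show "0 < C / 2 + 1" using C by simp
    fix f assume mean: "(\<Sum>a\<in>M. p a * f a) = 0"
    have "2 * (\<Sum>a\<in>M. p a * (f a)\<^sup>2) = (\<Sum>x\<in>M. \<Sum>y\<in>M. p x * p y * (f x - f y)\<^sup>2)"
      using double_sum_sq_diff[of p f M] mean sum_one by simp
    also have "\<dots> \<le> (\<Sum>x\<in>M. \<Sum>y\<in>M. p x * p y * (C * dirichlet_form M p Q f))"
      using pair pos by (intro sum_mono mult_left_mono) (auto simp: less_imp_le)
    also have "\<dots> = C * dirichlet_form M p Q f"
      using sum_one by (simp add: sum_distrib_right[symmetric] sum_distrib_left[symmetric] mult_ac)
    finally show "(\<Sum>a\<in>M. p a * (f a)\<^sup>2) \<le> (C / 2 + 1) * dirichlet_form M p Q f"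
      using D_nonneg[of f] by (simp add: algebra_simps)
  qed
qed

lemma quadratic_form_eq_dirichlet_form:
  assumes row: "\<forall>a\<in>M. (\<Sum>b\<in>M. Q a b) = 0"
    and rev: "\<forall>a\<in>M. \<forall>b\<in>M. p a * Q a b = p b * Q b a"
  shows "(\<Sum>a\<in>M. \<Sum>b\<in>M. p a * Q a b * f a * f b) = - (1/2) * dirichlet_form M p Q f"
proof -
  have diag: "(\<Sum>a\<in>M. \<Sum>b\<in>M. p a * Q a b * (f a)\<^sup>2) = 0"
  proof -
    have "(\<Sum>a\<in>M. \<Sum>b\<in>M. p a * Q a b * (f a)\<^sup>2) = (\<Sum>a\<in>M. p a * (f a)\<^sup>2 * (\<Sum>b\<in>M. Q a b))"
      by (intro sum.cong refl) (simp add: sum_distrib_left sum_distrib_right mult_ac)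
    then show ?thesis using row by simp
  qed
  have "(\<Sum>a\<in>M. \<Sum>b\<in>M. p a * Q a b * (f b)\<^sup>2) = (\<Sum>a\<in>M. \<Sum>b\<in>M. p b * Q b a * (f b)\<^sup>2)"
    using rev by (intro sum.cong) auto
  also have "\<dots> = 0"
    using diag by (subst sum.swap) simp
  finally have "(\<Sum>a\<in>M. \<Sum>b\<in>M. p a * Q a b * (f b)\<^sup>2) = 0" .
  moreover have "dirichlet_form M p Q f = (\<Sum>a\<in>M. \<Sum>b\<in>M. p a * Q a b * (f a)\<^sup>2)
      - 2 * (\<Sum>a\<in>M. \<Sum>b\<in>M. p a * Q a b * f a * f b) + (\<Sum>a\<in>M. \<Sum>b\<in>M. p a * Q a b * (f b)\<^sup>2)"
    unfolding dirichlet_form_def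
    by (simp add: power2_diff algebra_simps sum.distrib sum_subtractf sum_distrib_left)
  ultimately show ?thesis
    using diag by simp
qed

section \<open>Contraction in the chi-square norm\<close>

text \<open>The norm of \<open>L\<^sup>2(1/p)\<close>; at \<open>\<mu> - p\<close> its square is the \<open>\<chi>\<^sup>2\<close>-distance of \<open>\<mu>\<close> from \<open>p\<close>.\<close>
definition chi_norm :: "'a set \<Rightarrow> ('a \<Rightarrow> real) \<Rightarrow> ('a \<Rightarrow> real) \<Rightarrow> real"
  where "chi_norm M p v = L2_set (\<lambda>a. v a / sqrt (p a)) M"

lemma chi_norm_sq:
  assumes "\<forall>a\<in>M. 0 \<le> p a"
  shows "(chi_norm M p v)\<^sup>2 = (\<Sum>a\<in>M. (v a)\<^sup>2 / p a)"
  using assms unfolding chi_norm_def L2_set_def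
  by (simp add: power_divide sum_nonneg)

lemma chi_norm_nonneg: "0 \<le> chi_norm M p v"
  by (simp add: chi_norm_def)

lemma chi_norm_cong: "(\<And>a. a \<in> M \<Longrightarrow> v a = w a) \<Longrightarrow> chi_norm M p v = chi_norm M p w"
  unfolding chi_norm_def by (rule L2_set_cong) auto

lemma chi_norm_add: "chi_norm M p (\<lambda>a. v a + w a) \<le> chi_norm M p v + chi_norm M p w"
  unfolding chi_norm_def add_divide_distrib by (rule L2_set_triangle_ineq)

lemma chi_norm_le_uniform:
  assumes "\<forall>a\<in>M. 0 \<le> p a" and "\<And>a. a \<in> M \<Longrightarrow> \<bar>v a\<bar> \<le> \<eta>"
  shows "chi_norm M p v \<le> \<eta> * (\<Sum>a\<in>M. 1 / sqrt (p a))"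
proof -
  have "chi_norm M p v \<le> (\<Sum>a\<in>M. \<bar>v a / sqrt (p a)\<bar>)"
    unfolding chi_norm_def by (rule L2_set_le_sum_abs)
  also have "\<dots> \<le> (\<Sum>a\<in>M. \<eta> * (1 / sqrt (p a)))"
    using assms by (intro sum_mono) (simp add: abs_div divide_right_mono)
  finally show ?thesis
    by (simp add: sum_distrib_left)
qed

lemma abs_le_chi_norm:
  assumes "finite M" "a \<in> M" and "\<forall>b\<in>M. 0 < p b" and "p a \<le> 1"
  shows "\<bar>v a\<bar> \<le> chi_norm M p v"
proof (rule power2_le_imp_le)
  have "\<bar>v a\<bar>\<^sup>2 \<le> (v a)\<^sup>2 / p a"
    using assms by (simp add: le_divide_eq mult_left_le)
  also have "\<dots> \<le> (\<Sum>b\<in>M. (v b)\<^sup>2 / p b)"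
    using assms by (intro member_le_sum) (auto simp: less_imp_le)
  also have "\<dots> = (chi_norm M p v)\<^sup>2"
    using assms by (simp add: chi_norm_sq less_imp_le)
  finally show "\<bar>v a\<bar>\<^sup>2 \<le> (chi_norm M p v)\<^sup>2" .
qed (rule chi_norm_nonneg)

lemma chi_norm_mult_sq_le:
  assumes "\<forall>a\<in>M. 0 < p a"
  shows "(chi_norm M p (\<lambda>b. \<Sum>a\<in>M. v a * Q a b))\<^sup>2
           \<le> (\<Sum>b\<in>M. \<Sum>a\<in>M. p a * (Q a b)\<^sup>2 / p b) * (chi_norm M p v)\<^sup>2"
proof -
  have p: "\<forall>a\<in>M. 0 \<le> p a" using assms by (auto simp: less_imp_le)
  have column: "(\<Sum>a\<in>M. v a * Q a b)\<^sup>2 \<le> (chi_norm M p v)\<^sup>2 * (\<Sum>a\<in>M. p a * (Q a b)\<^sup>2)" for b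
  proof -
    have "(\<Sum>a\<in>M. v a * Q a b) = (\<Sum>a\<in>M. (v a / sqrt (p a)) * (sqrt (p a) * Q a b))"
      using assms by (intro sum.cong) auto
    also have "\<dots>\<^sup>2 \<le> (\<Sum>a\<in>M. (v a / sqrt (p a))\<^sup>2) * (\<Sum>a\<in>M. (sqrt (p a) * Q a b)\<^sup>2)"
      by (rule Cauchy_Schwarz_ineq_sum)
    also have "\<dots> = (chi_norm M p v)\<^sup>2 * (\<Sum>a\<in>M. p a * (Q a b)\<^sup>2)"
      using p by (simp add: chi_norm_sq power_divide power_mult_distrib)
    finally show ?thesis .
  qed
  have "(chi_norm M p (\<lambda>b. \<Sum>a\<in>M. v a * Q a b))\<^sup>2 = (\<Sum>b\<in>M. (\<Sum>a\<in>M. v a * Q a b)\<^sup>2 / p b)"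
    using p by (rule chi_norm_sq)
  also have "\<dots> \<le> (\<Sum>b\<in>M. (chi_norm M p v)\<^sup>2 * (\<Sum>a\<in>M. p a * (Q a b)\<^sup>2) / p b)"
    using column p by (intro sum_mono divide_right_mono) auto
  also have "\<dots> = (\<Sum>b\<in>M. \<Sum>a\<in>M. p a * (Q a b)\<^sup>2 / p b) * (chi_norm M p v)\<^sup>2"
    by (simp add: sum_distrib_left sum_distrib_right sum_divide_distrib mult_ac)
  finally show ?thesis .
qed

text \<open>Replaces \<open>x \<le> sqrt y * z\<close> by a bound linear in \<open>y\<close>, via \<open>sqrt y \<le> (1 + y) / 2\<close>.\<close>
lemma le_mult_if_sq_le_mult_sq:
  fixes x y z :: real
  assumes "0 \<le> x" "0 \<le> z" and "x\<^sup>2 \<le> y * z\<^sup>2"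
  shows "x \<le> (1 + y) / 2 * z"
proof (cases "z = 0")
  case True
  then show ?thesis using assms by simp
next
  case False
  have "x * (2 * z) \<le> x\<^sup>2 + z\<^sup>2"
    using zero_le_power2[of "x - z"] by (simp add: power2_eq_square algebra_simps)
  also have "\<dots> \<le> (1 + y) / 2 * z * (2 * z)"
    using assms by (simp add: power2_eq_square algebra_simps)
  finally show ?thesis
    using assms False by (simp add: mult_le_cancel_right)
qed

locale reversible_generator =
  fixes M :: "'a set" and p :: "'a \<Rightarrow> real" and Q :: "'a \<Rightarrow> 'a \<Rightarrow> real"
  assumes finite: "finite M"
    and positive: "\<forall>a\<in>M. 0 < p a"
    and sum_one: "(\<Sum>a\<in>M. p a) = 1"
    and off_diag_nonneg: "\<forall>a\<in>M. \<forall>b\<in>M. a \<noteq> b \<longrightarrow> 0 \<le> Q a b"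
    and stationary: "\<forall>b\<in>M. (\<Sum>a\<in>M. p a * Q a b) = 0"
    and reversible: "\<forall>a\<in>M. \<forall>b\<in>M. p a * Q a b = p b * Q b a"
    and irreducible: "\<forall>a\<in>M. \<forall>b\<in>M. (a, b) \<in> {(x, y). x \<in> M \<and> y \<in> M \<and> x \<noteq> y \<and> 0 < Q x y}\<^sup>*"
begin

lemma nonneg: "\<forall>a\<in>M. 0 \<le> p a"
  using positive by (auto simp: less_imp_le)

lemma le_one: "a \<in> M \<Longrightarrow> p a \<le> 1"
  using member_le_sum[of a M p] finite nonneg sum_one by simp

lemma row_sum_zero: "\<forall>a\<in>M. (\<Sum>b\<in>M. Q a b) = 0"
proof
  fix a assume a: "a \<in> M"
  have "p a * (\<Sum>b\<in>M. Q a b) = (\<Sum>b\<in>M. p b * Q b a)"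
    using reversible a by (simp add: sum_distrib_left)
  also have "\<dots> = 0" using stationary a by blast
  finally show "(\<Sum>b\<in>M. Q a b) = 0" using positive a by force
qed

lemma drift_eq_dirichlet_form:
  "(\<Sum>b\<in>M. v b * (\<Sum>a\<in>M. v a * Q a b) / p b) = - (1/2) * dirichlet_form M p Q (\<lambda>a. v a / p a)"
proof -
  let ?f = "\<lambda>a. v a / p a"
  have "v b * (\<Sum>a\<in>M. v a * Q a b) / p b = (\<Sum>a\<in>M. p a * Q a b * ?f a * ?f b)" if "b \<in> M" for b
  proof -
    have "(\<Sum>a\<in>M. v a * Q a b) = (\<Sum>a\<in>M. p a * Q a b * ?f a)"
      using positive by (intro sum.cong) auto
    then show ?thesis
      by (simp add: sum_distrib_left sum_divide_distrib mult_ac)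
  qed
  then have "(\<Sum>b\<in>M. v b * (\<Sum>a\<in>M. v a * Q a b) / p b) = (\<Sum>b\<in>M. \<Sum>a\<in>M. p a * Q a b * ?f a * ?f b)"
    by (rule sum.cong[OF refl])
  also have "\<dots> = - (1/2) * dirichlet_form M p Q ?f"
    by (subst sum.swap) (rule quadratic_form_eq_dirichlet_form[OF row_sum_zero reversible])
  finally show ?thesis .
qed

text \<open>Spectral gap: the drift is minus half the Dirichlet form of \<open>v/p\<close>, which the Poincare
  inequality bounds below by the \<open>\<chi>\<^sup>2\<close>-norm of the centred vector \<open>v\<close>.\<close>
lemma spectral_gap:
  obtains \<gamma> where "0 < \<gamma>"
    and "\<And>v. (\<Sum>a\<in>M. v a) = 0 \<Longrightarrow>
           (\<Sum>b\<in>M. v b * (\<Sum>a\<in>M. v a * Q a b) / p b) \<le> - \<gamma> * (chi_norm M p v)\<^sup>2"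
proof -
  obtain C where C: "0 < C"
    and poincare: "\<And>f. (\<Sum>a\<in>M. p a * f a) = 0 \<Longrightarrow> (\<Sum>a\<in>M. p a * (f a)\<^sup>2) \<le> C * dirichlet_form M p Q f"
    using poincare_inequality[OF finite positive sum_one off_diag_nonneg irreducible] by blast
  show thesis
  proof (rule that[of "1 / (2 * C)"])
    show "0 < 1 / (2 * C)" using C by simp
    fix v :: "'a \<Rightarrow> real" assume v: "(\<Sum>a\<in>M. v a) = 0"
    have "(\<Sum>a\<in>M. p a * (v a / p a)) = (\<Sum>a\<in>M. v a)" and "(\<Sum>a\<in>M. (v a)\<^sup>2 / p a) = (\<Sum>a\<in>M. p a * (v a / p a)\<^sup>2)"
      using positive by (auto intro!: sum.cong simp: power2_eq_square)
    with v have "(chi_norm M p v)\<^sup>2 \<le> C * dirichlet_form M p Q (\<lambda>a. v a / p a)"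
      by (simp add: chi_norm_sq[OF nonneg] poincare)
    with C show "(\<Sum>b\<in>M. v b * (\<Sum>a\<in>M. v a * Q a b) / p b) \<le> - (1 / (2 * C)) * (chi_norm M p v)\<^sup>2"
      by (simp add: drift_eq_dirichlet_form field_simps)
  qed
qed

lemma euler_step_contraction:
  obtains \<gamma> c where "0 < \<gamma>"
    and "\<And>v e. (\<Sum>a\<in>M. v a) = 0 \<Longrightarrow> 0 \<le> e \<Longrightarrow>
           chi_norm M p (\<lambda>b. v b + e * (\<Sum>a\<in>M. v a * Q a b)) \<le> (1 - \<gamma> * e + c * e\<^sup>2) * chi_norm M p v"
proof -
  obtain \<gamma> where \<gamma>: "0 < \<gamma>"
    and gap: "\<And>v. (\<Sum>a\<in>M. v a) = 0 \<Longrightarrow>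
           (\<Sum>b\<in>M. v b * (\<Sum>a\<in>M. v a * Q a b) / p b) \<le> - \<gamma> * (chi_norm M p v)\<^sup>2"
    using spectral_gap by blast
  define c where "c = (\<Sum>b\<in>M. \<Sum>a\<in>M. p a * (Q a b)\<^sup>2 / p b)"
  show thesis
  proof (rule that[OF \<gamma>, of "c / 2"])
    fix v :: "'a \<Rightarrow> real" and e :: real
    assume v: "(\<Sum>a\<in>M. v a) = 0" and e: "0 \<le> e"
    define u where "u b = (\<Sum>a\<in>M. v a * Q a b)" for b
    have "(chi_norm M p (\<lambda>b. v b + e * u b))\<^sup>2
        = (chi_norm M p v)\<^sup>2 + 2 * e * (\<Sum>b\<in>M. v b * u b / p b) + e\<^sup>2 * (chi_norm M p u)\<^sup>2"
      using nonneg
      by (simp add: chi_norm_sq power2_sum power_mult_distrib add_divide_distrib sum.distrib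
          sum_distrib_left mult_ac)
    also have "\<dots> \<le> (chi_norm M p v)\<^sup>2 + 2 * e * (- \<gamma> * (chi_norm M p v)\<^sup>2) + e\<^sup>2 * (c * (chi_norm M p v)\<^sup>2)"
      using gap[OF v] chi_norm_mult_sq_le[OF positive, of v Q] e
      unfolding u_def c_def by (intro add_mono mult_left_mono) auto
    finally have "(chi_norm M p (\<lambda>b. v b + e * u b))\<^sup>2 \<le> (1 - 2 * \<gamma> * e + c * e\<^sup>2) * (chi_norm M p v)\<^sup>2"
      by (simp add: algebra_simps)
    then have "chi_norm M p (\<lambda>b. v b + e * u b) \<le> (1 + (1 - 2 * \<gamma> * e + c * e\<^sup>2)) / 2 * chi_norm M p v"
      by (intro le_mult_if_sq_le_mult_sq chi_norm_nonneg)
    then show "chi_norm M p (\<lambda>b. v b + e * (\<Sum>a\<in>M. v a * Q a b)) \<le> (1 - \<gamma> * e + c / 2 * e\<^sup>2) * chi_norm M p v"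
      by (simp add: u_def field_simps)
  qed
qed

lemma transition_decomposition:
  assumes \<mu>: "\<And>a. a \<in> M \<Longrightarrow> 0 \<le> \<mu> a" "(\<Sum>a\<in>M. \<mu> a) = 1"
    and P: "\<And>a b. a \<in> M \<Longrightarrow> b \<in> M \<Longrightarrow> \<bar>P a b - (if a = b then 1 else 0) - e * Q a b\<bar> \<le> \<eta>"
  obtains r where "\<And>b. b \<in> M \<Longrightarrow>
      (\<Sum>a\<in>M. \<mu> a * P a b) - p b = (\<mu> b - p b) + e * (\<Sum>a\<in>M. (\<mu> a - p a) * Q a b) + r b"
    and "\<And>b. b \<in> M \<Longrightarrow> \<bar>r b\<bar> \<le> \<eta>"
proof
  define r where "r b = (\<Sum>a\<in>M. \<mu> a * (P a b - (if a = b then 1 else 0) - e * Q a b))" for b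
  fix b assume b: "b \<in> M"
  have "r b = (\<Sum>a\<in>M. \<mu> a * P a b) - (\<Sum>a\<in>M. \<mu> a * (if a = b then 1 else 0))
      - e * (\<Sum>a\<in>M. \<mu> a * Q a b)"
    unfolding r_def right_diff_distrib sum_subtractf by (simp add: sum_distrib_left mult_ac)
  moreover have "(\<Sum>a\<in>M. \<mu> a * (if a = b then 1 else 0)) = \<mu> b"
    using b finite by (simp add: if_distrib cong: if_cong)
  moreover have "(\<Sum>a\<in>M. \<mu> a * Q a b) = (\<Sum>a\<in>M. (\<mu> a - p a) * Q a b)"
    using stationary b by (simp add: algebra_simps sum_subtractf)
  ultimately show "(\<Sum>a\<in>M. \<mu> a * P a b) - p b = (\<mu> b - p b) + e * (\<Sum>a\<in>M. (\<mu> a - p a) * Q a b) + r b"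
    by simp
  have "\<bar>\<mu> a * (P a b - (if a = b then 1 else 0) - e * Q a b)\<bar> \<le> \<mu> a * \<eta>" if "a \<in> M" for a
    using mult_left_mono[OF P[OF that b] \<mu>(1)[OF that]] \<mu>(1)[OF that] by (simp add: abs_mult)
  then have "\<bar>r b\<bar> \<le> (\<Sum>a\<in>M. \<mu> a * \<eta>)"
    unfolding r_def by (intro order_trans[OF sum_abs] sum_mono)
  then show "\<bar>r b\<bar> \<le> \<eta>"
    using \<mu>(2) by (simp add: sum_distrib_right[symmetric])
qed

lemma chi_norm_transition_step:
  obtains \<gamma> c where "0 < \<gamma>"
    and "\<And>\<mu> P e \<eta>. (\<And>a. a \<in> M \<Longrightarrow> 0 \<le> \<mu> a) \<Longrightarrow> (\<Sum>a\<in>M. \<mu> a) = 1 \<Longrightarrow> 0 \<le> e \<Longrightarrow>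
           (\<And>a b. a \<in> M \<Longrightarrow> b \<in> M \<Longrightarrow> \<bar>P a b - (if a = b then 1 else 0) - e * Q a b\<bar> \<le> \<eta>) \<Longrightarrow>
           chi_norm M p (\<lambda>b. (\<Sum>a\<in>M. \<mu> a * P a b) - p b)
             \<le> (1 - \<gamma> * e + c * e\<^sup>2) * chi_norm M p (\<lambda>a. \<mu> a - p a) + \<eta> * (\<Sum>a\<in>M. 1 / sqrt (p a))"
proof -
  obtain \<gamma> c where \<gamma>: "0 < \<gamma>"
    and contraction: "\<And>v e. (\<Sum>a\<in>M. v a) = 0 \<Longrightarrow> 0 \<le> e \<Longrightarrow>
           chi_norm M p (\<lambda>b. v b + e * (\<Sum>a\<in>M. v a * Q a b)) \<le> (1 - \<gamma> * e + c * e\<^sup>2) * chi_norm M p v"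
    using euler_step_contraction by blast
  show thesis
  proof (rule that[OF \<gamma>])
    fix \<mu> :: "'a \<Rightarrow> real" and P :: "'a \<Rightarrow> 'a \<Rightarrow> real" and e \<eta> :: real
    assume \<mu>: "\<And>a. a \<in> M \<Longrightarrow> 0 \<le> \<mu> a" "(\<Sum>a\<in>M. \<mu> a) = 1" and e: "0 \<le> e"
      and P: "\<And>a b. a \<in> M \<Longrightarrow> b \<in> M \<Longrightarrow> \<bar>P a b - (if a = b then 1 else 0) - e * Q a b\<bar> \<le> \<eta>"
    obtain r where decomp: "\<And>b. b \<in> M \<Longrightarrow>
        (\<Sum>a\<in>M. \<mu> a * P a b) - p b = (\<mu> b - p b) + e * (\<Sum>a\<in>M. (\<mu> a - p a) * Q a b) + r b"
      and r: "\<And>b. b \<in> M \<Longrightarrow> \<bar>r b\<bar> \<le> \<eta>"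
      using transition_decomposition[OF \<mu> P] by blast
    have centred: "(\<Sum>a\<in>M. \<mu> a - p a) = 0"
      using \<mu>(2) sum_one by (simp add: sum_subtractf)
    have "chi_norm M p (\<lambda>b. (\<Sum>a\<in>M. \<mu> a * P a b) - p b)
        = chi_norm M p (\<lambda>b. ((\<mu> b - p b) + e * (\<Sum>a\<in>M. (\<mu> a - p a) * Q a b)) + r b)"
      using decomp by (intro chi_norm_cong) simp
    also have "\<dots> \<le> chi_norm M p (\<lambda>b. (\<mu> b - p b) + e * (\<Sum>a\<in>M. (\<mu> a - p a) * Q a b)) + chi_norm M p r"
      by (rule chi_norm_add)
    also have "\<dots> \<le> (1 - \<gamma> * e + c * e\<^sup>2) * chi_norm M p (\<lambda>a. \<mu> a - p a) + \<eta> * (\<Sum>a\<in>M. 1 / sqrt (p a))"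
      using contraction[OF centred e] chi_norm_le_uniform[OF nonneg r] by (rule add_mono)
    finally show "chi_norm M p (\<lambda>b. (\<Sum>a\<in>M. \<mu> a * P a b) - p b)
        \<le> (1 - \<gamma> * e + c * e\<^sup>2) * chi_norm M p (\<lambda>a. \<mu> a - p a) + \<eta> * (\<Sum>a\<in>M. 1 / sqrt (p a))" .
  qed
qed

end

section \<open>Recursions with vanishing steps of divergent sum\<close>

lemma contraction_recursion_tendsto_zero:
  fixes W a :: "nat \<Rightarrow> real"
  assumes nonneg: "\<And>n. 0 \<le> W n"
    and contracts: "\<And>n. n \<ge> n0 \<Longrightarrow> W (Suc n) \<le> (1 - a (Suc n)) * W n"
    and diverges: "filterlim (\<lambda>n. \<Sum>s=1..n. a s) at_top sequentially"
  shows "W \<longlonglongrightarrow> 0"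
proof -
  define A where "A n = (\<Sum>s=1..n. a s)" for n
  have bound: "W n \<le> W n0 * exp (A n0 - A n)" if "n0 \<le> n" for n
    using that
  proof (induction n rule: dec_induct)
    case base
    then show ?case by simp
  next
    case (step n)
    have "W (Suc n) \<le> (1 - a (Suc n)) * W n"
      using step.hyps(1) by (rule contracts)
    also have "\<dots> \<le> exp (- a (Suc n)) * W n"
      using nonneg exp_ge_add_one_self[of "- a (Suc n)"] by (intro mult_right_mono) auto
    also have "\<dots> \<le> exp (- a (Suc n)) * (W n0 * exp (A n0 - A n))"
      using step.IH by (intro mult_left_mono) auto
    also have "\<dots> = W n0 * exp (A n0 - A (Suc n))"
      by (simp add: A_def exp_add[symmetric])
    finally show ?case .
  qed
  have "filterlim (\<lambda>n. A n0 - A n) at_bot sequentially"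
    using filterlim_tendsto_add_at_top[OF tendsto_const diverges, of "- A n0"]
    unfolding A_def by (simp add: filterlim_uminus_at_bot)
  then have "(\<lambda>n. W n0 * exp (A n0 - A n)) \<longlonglongrightarrow> 0"
    by (intro tendsto_mult_right_zero filterlim_compose[OF exp_at_bot])
  moreover have "eventually (\<lambda>n. norm (W n) \<le> W n0 * exp (A n0 - A n)) sequentially"
    using bound nonneg unfolding eventually_sequentially by auto
  ultimately show ?thesis
    by (rule Lim_null_comparison[rotated])
qed

text \<open>Once the step \<open>e\<close> is small, the shift by \<open>d\<close> absorbs the \<open>O(e\<^sup>2)\<close> terms into half the contraction.\<close>
lemma shifted_contraction_step:
  fixes x x' e \<alpha> \<beta> \<gamma> d :: real
  assumes x: "0 \<le> x" and e: "0 < e" and small: "\<alpha> / 2 * e \<le> 1" "\<beta> * e \<le> \<alpha> / 2" "\<gamma> * e \<le> \<alpha> / 2 * d"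
    and step: "x' \<le> (1 - \<alpha> * e + \<beta> * e\<^sup>2) * x + \<gamma> * e\<^sup>2"
  shows "max (x' - d) 0 \<le> (1 - \<alpha> / 2 * e) * max (x - d) 0"
proof -
  have "\<beta> * e\<^sup>2 * x \<le> \<alpha> * e * x / 2"
    using mult_right_mono[OF mult_left_mono[OF small(2) less_imp_le[OF e]] x]
    by (simp add: power2_eq_square mult_ac)
  moreover have "\<gamma> * e\<^sup>2 \<le> \<alpha> * e * d / 2"
    using mult_left_mono[OF small(3) less_imp_le[OF e]]
    by (simp add: power2_eq_square mult_ac)
  moreover have "x' \<le> x - \<alpha> * e * x + \<beta> * e\<^sup>2 * x + \<gamma> * e\<^sup>2"
    using step by (simp add: algebra_simps)
  moreover have "(1 - \<alpha> / 2 * e) * (x - d) = x - d - \<alpha> * e * x / 2 + \<alpha> * e * d / 2"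
    by (simp add: field_simps)
  ultimately have "x' - d \<le> (1 - \<alpha> / 2 * e) * (x - d)"
    by linarith
  also have "\<dots> \<le> (1 - \<alpha> / 2 * e) * max (x - d) 0"
    using small(1) by (intro mult_left_mono) auto
  finally show ?thesis
    using small(1) by simp
qed

lemma perturbed_contraction_tendsto_zero:
  fixes x e :: "nat \<Rightarrow> real" and \<alpha> \<beta> \<gamma> :: real
  assumes nonneg: "\<And>n. 0 \<le> x n" and \<alpha>: "0 < \<alpha>"
    and e_pos: "\<forall>s\<ge>1. 0 < e s" and e_lim: "e \<longlonglongrightarrow> 0"
    and e_div: "filterlim (\<lambda>n. \<Sum>s=1..n. e s) at_top sequentially"
    and step: "\<And>n. x (Suc n) \<le> (1 - \<alpha> * e (Suc n) + \<beta> * (e (Suc n))\<^sup>2) * x n + \<gamma> * (e (Suc n))\<^sup>2"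
  shows "x \<longlonglongrightarrow> 0"
proof (rule LIMSEQ_I)
  fix r :: real assume "0 < r"
  define d where "d = r / 2"
  have d: "0 < d" using \<open>0 < r\<close> by (simp add: d_def)
  define a where "a n = \<alpha> / 2 * e n" for n
  have "eventually (\<lambda>n. a n < 1 \<and> \<beta> * e n < \<alpha> / 2 \<and> \<gamma> * e n < \<alpha> / 2 * d) sequentially"
    using e_lim \<alpha> d unfolding a_def
    by (intro eventually_conj order_tendstoD(2)[of _ 0] tendsto_mult_right_zero) auto
  then obtain n0 where small: "\<And>n. n \<ge> n0 \<Longrightarrow> a n < 1 \<and> \<beta> * e n < \<alpha> / 2 \<and> \<gamma> * e n < \<alpha> / 2 * d"
    unfolding eventually_sequentially by blast
  define W where "W n = max (x n - d) 0" for n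
  have "W (Suc n) \<le> (1 - a (Suc n)) * W n" if "n \<ge> n0" for n
    using shifted_contraction_step[OF nonneg[of n] _ _ _ _ step[of n]] small[OF le_SucI[OF that]] e_pos
    unfolding W_def a_def by (simp add: less_imp_le)
  moreover have "filterlim (\<lambda>n. \<Sum>s=1..n. a s) at_top sequentially"
    unfolding a_def sum_distrib_left[symmetric]
    using \<alpha> by (intro filterlim_tendsto_pos_mult_at_top[OF tendsto_const _ e_div]) simp
  ultimately have "W \<longlonglongrightarrow> 0"
    by (intro contraction_recursion_tendsto_zero[of W n0 a]) (auto simp: W_def)
  from order_tendstoD(2)[OF this d] obtain n1 where W_small: "\<And>n. n \<ge> n1 \<Longrightarrow> W n < d"
    unfolding eventually_sequentially by blast
  have "norm (x n - 0) < r" if "n \<ge> n1" for n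
    using W_small[OF that] nonneg[of n] by (simp add: W_def d_def max_def split: if_splits)
  then show "\<exists>n1. \<forall>n\<ge>n1. norm (x n - 0) < r" by blast
qed

section \<open>Convergence in an arbitrary norm\<close>

lemma is_norm_on_le_sum_abs:
  assumes N: "is_norm_on k N" and w: "w \<in> vecs k"
  shows "N w \<le> (\<Sum>m\<in>models k. \<bar>w m\<bar> * N (\<lambda>x. if x = m then 1 else 0))"
proof -
  let ?e = "\<lambda>m x. if x = m then (1::real) else 0"
  have fin: "finite (models k)" by (simp add: models_def)
  have N0: "\<forall>v\<in>vecs k. N v \<ge> 0 \<and> (N v = 0 \<longleftrightarrow> v = (\<lambda>_. 0))"
    and Ns: "\<forall>v\<in>vecs k. \<forall>c. N (\<lambda>m. c * v m) = \<bar>c\<bar> * N v"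
    and Nt: "\<forall>v\<in>vecs k. \<forall>w\<in>vecs k. N (\<lambda>m. v m + w m) \<le> N v + N w"
    using N unfolding is_norm_on_def by blast+
  have partial: "N (\<lambda>x. \<Sum>m\<in>A. w m * ?e m x) \<le> (\<Sum>m\<in>A. \<bar>w m\<bar> * N (?e m))"
    if "A \<subseteq> models k" for A
    using finite_subset[OF that fin] that
  proof (induction A rule: finite_induct)
    case empty
    have "(\<lambda>_. 0::real) \<in> vecs k" by (simp add: vecs_def)
    then show ?case using N0 by force
  next
    case (insert a F)
    have a: "a \<in> models k" and F: "F \<subseteq> models k" using insert by auto
    have ea: "?e a \<in> vecs k" and eaw: "(\<lambda>x. w a * ?e a x) \<in> vecs k"
      using a by (auto simp: vecs_def)
    have eF: "(\<lambda>x. \<Sum>m\<in>F. w m * ?e m x) \<in> vecs k"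
      using F unfolding vecs_def by (auto intro!: sum.neutral)
    have "N (\<lambda>x. \<Sum>m\<in>insert a F. w m * ?e m x) = N (\<lambda>x. w a * ?e a x + (\<Sum>m\<in>F. w m * ?e m x))"
      using insert by simp
    also have "\<dots> \<le> N (\<lambda>x. w a * ?e a x) + N (\<lambda>x. \<Sum>m\<in>F. w m * ?e m x)"
      using Nt[rule_format, OF eaw eF] by simp
    also have "N (\<lambda>x. w a * ?e a x) = \<bar>w a\<bar> * N (?e a)"
      using Ns[rule_format, OF ea, of "w a"] by simp
    also have "N (\<lambda>x. \<Sum>m\<in>F. w m * ?e m x) \<le> (\<Sum>m\<in>F. \<bar>w m\<bar> * N (?e m))"
      using insert F by blast
    finally show ?case using insert by simp
  qed
  have "w = (\<lambda>x. \<Sum>m\<in>models k. w m * ?e m x)"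
  proof
    fix x show "w x = (\<Sum>m\<in>models k. w m * ?e m x)"
      using w fin by (cases "x \<in> models k") (auto simp: vecs_def if_distrib cong: if_cong)
  qed
  then show ?thesis using partial[of "models k"] by simp
qed

lemma is_norm_on_tendsto_zero:
  assumes N: "is_norm_on k N" and w: "\<And>s. w s \<in> vecs k"
    and lim: "\<And>m. m \<in> models k \<Longrightarrow> (\<lambda>s. w s m) \<longlonglongrightarrow> 0"
  shows "(\<lambda>s. N (w s)) \<longlonglongrightarrow> 0"
proof (rule Lim_null_comparison)
  show "eventually (\<lambda>s. norm (N (w s)) \<le> (\<Sum>m\<in>models k. \<bar>w s m\<bar> * N (\<lambda>x. if x = m then 1 else 0))) sequentially"
    using N w is_norm_on_le_sum_abs unfolding is_norm_on_def by (simp add: always_eventually)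
  show "(\<lambda>s. \<Sum>m\<in>models k. \<bar>w s m\<bar> * N (\<lambda>x. if x = m then 1 else 0)) \<longlonglongrightarrow> 0"
    using lim by (intro tendsto_null_sum tendsto_mult_left_zero tendsto_rabs_zero)
qed

lemma is_norm_on_tendsto_zero_if_chi_norm:
  assumes N: "is_norm_on k N" and p: "\<forall>m\<in>models k. 0 < p m" "\<And>m. m \<in> models k \<Longrightarrow> p m \<le> 1"
    and lim: "(\<lambda>s. chi_norm (models k) p (w s)) \<longlonglongrightarrow> 0"
  shows "(\<lambda>s. N (\<lambda>m. if m \<in> models k then w s m else 0)) \<longlonglongrightarrow> 0"
proof (rule is_norm_on_tendsto_zero[OF N])
  show "(\<lambda>m. if m \<in> models k then w s m else 0) \<in> vecs k" for s
    by (simp add: vecs_def)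
  fix m assume m: "m \<in> models k"
  have "norm (w s m) \<le> chi_norm (models k) p (w s)" for s
    using abs_le_chi_norm[OF _ m p(1) p(2)[OF m]] by (simp add: models_def)
  then have "(\<lambda>s. w s m) \<longlonglongrightarrow> 0"
    by (intro Lim_null_comparison[OF always_eventually lim]) simp
  with m show "(\<lambda>s. if m \<in> models k then w s m else 0) \<longlonglongrightarrow> 0"
    by simp
qed

lemma reversible_generator_Qrate:
  assumes "\<forall>i<k. \<forall>m\<in>models k. q i m \<ge> 0"
    and "irreducible_Q k (Qrate k q)" and "is_distribution k p"
    and "stationary_Q k (Qrate k q) p" and "\<forall>m\<in>models k. p m > 0"
    and "reversible_Q k (Qrate k q) p"
  shows "reversible_generator (models k) p (Qrate k q)"
proof
  show "finite (models k)" by (simp add: models_def)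
  show "\<forall>a\<in>models k. \<forall>b\<in>models k. a \<noteq> b \<longrightarrow> 0 \<le> Qrate k q a b"
    using assms(1) by (auto intro!: Qrate_off_diag_nonneg)
qed (use assms(2-) in
     \<open>simp_all add: is_distribution_def stationary_Q_def reversible_Q_def irreducible_Q_def\<close>)

lemma chi_norm_mu_seq_recursion:
  assumes gen: "reversible_generator (models k) p (Qrate k q)"
    and mu0: "is_distribution k mu0" and eps_pos: "\<forall>s\<ge>1. eps s > 0"
    and eps_q: "\<forall>s\<ge>1. \<forall>i<k. \<forall>m\<in>models k. 0 \<le> eps s * q i m \<and> eps s * q i m \<le> 1"
  obtains \<gamma> c K where "0 < \<gamma>"
    and "\<And>s. chi_norm (models k) p (\<lambda>m. mu_seq k q eps mu0 (Suc s) m - p m)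
           \<le> (1 - \<gamma> * eps (Suc s) + c * (eps (Suc s))\<^sup>2) * chi_norm (models k) p (\<lambda>m. mu_seq k q eps mu0 s m - p m)
             + K * (eps (Suc s))\<^sup>2"
proof -
  interpret reversible_generator "models k" p "Qrate k q" by (rule gen)
  let ?M = "models k" and ?Q = "Qrate k q"
  obtain \<gamma> c where \<gamma>: "0 < \<gamma>" and transition_step: "\<And>\<mu> P e \<eta>.
      (\<And>a. a \<in> ?M \<Longrightarrow> 0 \<le> \<mu> a) \<Longrightarrow> (\<Sum>a\<in>?M. \<mu> a) = 1 \<Longrightarrow> 0 \<le> e \<Longrightarrow>
      (\<And>a b. a \<in> ?M \<Longrightarrow> b \<in> ?M \<Longrightarrow> \<bar>P a b - (if a = b then 1 else 0) - e * ?Q a b\<bar> \<le> \<eta>) \<Longrightarrow>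
      chi_norm ?M p (\<lambda>b. (\<Sum>a\<in>?M. \<mu> a * P a b) - p b)
        \<le> (1 - \<gamma> * e + c * e\<^sup>2) * chi_norm ?M p (\<lambda>a. \<mu> a - p a) + \<eta> * (\<Sum>a\<in>?M. 1 / sqrt (p a))"
    using chi_norm_transition_step by blast
  define R where "R = (\<Sum>m\<in>?M. (\<Sum>i<k. q i m)\<^sup>2)"
  show thesis
  proof (rule that[OF \<gamma>, of c "R * (\<Sum>m\<in>?M. 1 / sqrt (p m))"])
    fix s
    let ?mu = "mu_seq k q eps mu0 s" and ?e = "eps (Suc s)"
    have e: "0 \<le> ?e" using eps_pos by (simp add: less_imp_le)
    have P_approx: "\<bar>Peps k q ?e m m' - (if m = m' then 1 else 0) - ?e * ?Q m m'\<bar> \<le> ?e\<^sup>2 * R"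
      if "m \<in> ?M" "m' \<in> ?M" for m m'
    proof -
      have "\<bar>Peps k q ?e m m' - (if m = m' then 1 else 0) - ?e * ?Q m m'\<bar> \<le> ?e\<^sup>2 * (\<Sum>i<k. q i m)\<^sup>2"
        using Peps_approx[of m k m' ?e q] that eps_q by (simp add: power_mult_distrib)
      also have "\<dots> \<le> ?e\<^sup>2 * R"
        unfolding R_def using that finite by (intro mult_left_mono member_le_sum) auto
      finally show ?thesis .
    qed
    have "is_distribution k ?mu"
      using mu0 eps_q by (rule mu_seq_distribution)
    then have "\<And>a. a \<in> ?M \<Longrightarrow> 0 \<le> ?mu a" and "(\<Sum>a\<in>?M. ?mu a) = 1"
      by (simp_all add: is_distribution_def)
    note step = transition_step[OF this e P_approx]
    have "?e\<^sup>2 * R * (\<Sum>m\<in>?M. 1 / sqrt (p m)) = R * (\<Sum>m\<in>?M. 1 / sqrt (p m)) * ?e\<^sup>2"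
      by (simp only: mult_ac)
    with step show "chi_norm ?M p (\<lambda>m. mu_seq k q eps mu0 (Suc s) m - p m)
        \<le> (1 - \<gamma> * ?e + c * ?e\<^sup>2) * chi_norm ?M p (\<lambda>m. ?mu m - p m)
          + R * (\<Sum>m\<in>?M. 1 / sqrt (p m)) * ?e\<^sup>2"
      by (simp only: mu_seq.simps(2))
  qed
qed

theorem theorem3p2:
  fixes k :: nat and q :: "nat \<Rightarrow> nat set \<Rightarrow> real" and pi :: "nat set \<Rightarrow> real"
    and eps :: "nat \<Rightarrow> real" and mu0 :: "nat set \<Rightarrow> real"
    and N :: "(nat set \<Rightarrow> real) \<Rightarrow> real"
  assumes q_nonneg: "\<forall>i<k. \<forall>m\<in>models k. q i m \<ge> 0"
    and irred: "irreducible_Q k (Qrate k q)"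
    and pi_dist: "is_distribution k pi"
    and pi_stat: "stationary_Q k (Qrate k q) pi"
    and pi_pos: "\<forall>m\<in>models k. pi m > 0"
    and rev: "reversible_Q k (Qrate k q) pi"
    and eps_pos: "\<forall>s\<ge>1. eps s > 0"
    and eps_le: "\<forall>s\<ge>1. \<forall>i<k. \<forall>m\<in>models k. eps s * q i m \<le> 1"
    and eps_lim: "eps \<longlonglongrightarrow> 0"
    and eps_div: "filterlim (\<lambda>n. \<Sum>s=1..n. eps s) at_top sequentially"
    and mu0_dist: "is_distribution k mu0"
    and N_norm: "is_norm_on k N"
  shows "(\<lambda>s. N (\<lambda>m. if m \<in> models k then mu_seq k q eps mu0 s m - pi m else 0))
           \<longlonglongrightarrow> 0"
proof -
  define x where "x s = chi_norm (models k) pi (\<lambda>m. mu_seq k q eps mu0 s m - pi m)" for s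
  have gen: "reversible_generator (models k) pi (Qrate k q)"
    using q_nonneg irred pi_dist pi_stat pi_pos rev by (rule reversible_generator_Qrate)
  have eps_q: "\<forall>s\<ge>1. \<forall>i<k. \<forall>m\<in>models k. 0 \<le> eps s * q i m \<and> eps s * q i m \<le> 1"
  proof (intro allI impI ballI conjI)
    fix s i :: nat and m assume "1 \<le> s" "i < k" "m \<in> models k"
    then show "0 \<le> eps s * q i m" "eps s * q i m \<le> 1"
      using eps_pos eps_le q_nonneg by (simp_all add: less_imp_le)
  qed
  obtain \<gamma> c K where "0 < \<gamma>"
    and "\<And>s. x (Suc s) \<le> (1 - \<gamma> * eps (Suc s) + c * (eps (Suc s))\<^sup>2) * x s + K * (eps (Suc s))\<^sup>2"
    using chi_norm_mu_seq_recursion[OF gen mu0_dist eps_pos eps_q] unfolding x_def by blast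
  with chi_norm_nonneg have "x \<longlonglongrightarrow> 0"
    unfolding x_def by (rule perturbed_contraction_tendsto_zero[OF _ _ eps_pos eps_lim eps_div])
  then show ?thesis
    unfolding x_def using N_norm pi_pos reversible_generator.le_one[OF gen]
    by (intro is_norm_on_tendsto_zero_if_chi_norm) blast+
qed

end
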